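(* For any dimension $d$ and any $d$-dimensional freezing cellular automaton $F$, there is a $d$-dimensional freezing cellular automaton $G$ with neighborhood $\mathrm{VN}_d$ that simulates $F$.
   Context: A $d$-dimensional cellular automaton (CA) is $F=(d,Q,N,f)$ with $Q$ finite, $N\subset\mathbb{Z}^d$ finite, $f:Q^N\to Q$, global map $F(c)_z=f(c|_{z+N})$. A CA is freezing if there is a partial order $\preceq$ on $Q$ with $F(c)_z\preceq c_z$ for all configurations $c$ and cells $z$. $\mathrm{VN}_d=\{\vec 0,\pm e_1,\dots,\pm e_d\}$. Simulation: $F'$ (states $Q_{F'}$) simulates $G'$ (states $Q_{G'}$), both of dimension $d$, if there exist $T>0$, a rectangular block $B\subseteq\mathbb{Z}^d$ with size-vector $b$, a finite $C\subset\mathbb{Z}^d$ with $\vec 0\in C$, and $\phi:Q_{G'}^C\to Q_{F'}^B$ such that $\bar\phi(c)_{bz+r}=\phi(c|_{z+C})_r$ ($z\in\mathbb{Z}^d,r\in B$, $bz$ componentwise) defines an injective map $\bar\phi$ with $\bar\phi(G'(c))=F'^T(\bar\phi(c))$ for all configurations $c$. *)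

theory Defs
  imports "HOL-Analysis.Analysis"
begin

text \<open>Cells of the d-dimensional lattice are integer vectors indexed by a finite type 'd
(d = CARD('d)). A configuration over state set Q is a map from cells to states
with all values in Q.\<close>

type_synonym 'd cell = "int ^ 'd"

definition configs :: "'q set \<Rightarrow> ('d::finite cell \<Rightarrow> 'q) set" where
  "configs Q = {c. \<forall>z. c z \<in> Q}"

definition pat :: "'d::finite cell set \<Rightarrow> ('d cell \<Rightarrow> 'q) \<Rightarrow> 'd cell \<Rightarrow> ('d cell \<Rightarrow> 'q)" where
  "pat N c z = (\<lambda>n. if n \<in> N then c (z + n) else undefined)"

definition global :: "'d::finite cell set \<Rightarrow> (('d cell \<Rightarrow> 'q) \<Rightarrow> 'q) \<Rightarrow> ('d cell \<Rightarrow> 'q) \<Rightarrow> ('d cell \<Rightarrow> 'q)" where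
  "global N f c = (\<lambda>z. f (pat N c z))"

definition is_CA :: "'q set \<Rightarrow> 'd::finite cell set \<Rightarrow> (('d cell \<Rightarrow> 'q) \<Rightarrow> 'q) \<Rightarrow> bool" where
  "is_CA Q N f \<longleftrightarrow> finite Q \<and> finite N \<and>
     (\<forall>p. (\<forall>n\<in>N. p n \<in> Q) \<and> (\<forall>n. n \<notin> N \<longrightarrow> p n = undefined) \<longrightarrow> f p \<in> Q)"

definition partial_order_on_set :: "'q set \<Rightarrow> ('q \<Rightarrow> 'q \<Rightarrow> bool) \<Rightarrow> bool" where
  "partial_order_on_set Q le \<longleftrightarrow>
     (\<forall>x\<in>Q. le x x) \<and>
     (\<forall>x\<in>Q. \<forall>y\<in>Q. le x y \<and> le y x \<longrightarrow> x = y) \<and>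
     (\<forall>x\<in>Q. \<forall>y\<in>Q. \<forall>z\<in>Q. le x y \<and> le y z \<longrightarrow> le x z)"

definition freezing :: "'q set \<Rightarrow> 'd::finite cell set \<Rightarrow> (('d cell \<Rightarrow> 'q) \<Rightarrow> 'q) \<Rightarrow> bool" where
  "freezing Q N f \<longleftrightarrow> (\<exists>le. partial_order_on_set Q le \<and>
     (\<forall>c\<in>configs Q. \<forall>z. le (global N f c z) (c z)))"

definition VN :: "'d::finite cell set" where
  "VN = insert 0 {axis i s | i s. s = 1 \<or> s = -1}"

definition block :: "'d::finite cell \<Rightarrow> 'd cell set" where
  "block b = {r. \<forall>i. 0 \<le> r $ i \<and> r $ i < b $ i}"

text \<open>The block map: phibar(c)_{b z + r} = phi(c|_{z+C})_r for r in the block;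
every cell x decomposes uniquely as x = b z + r with z = x div b, r = x mod b (componentwise).\<close>
definition blockmap :: "'d::finite cell \<Rightarrow> 'd cell set \<Rightarrow> (('d cell \<Rightarrow> 'q) \<Rightarrow> ('d cell \<Rightarrow> 'p))
     \<Rightarrow> ('d cell \<Rightarrow> 'q) \<Rightarrow> ('d cell \<Rightarrow> 'p)" where
  "blockmap b C phi c = (\<lambda>x. phi (pat C c (\<chi> i. x $ i div b $ i)) (\<chi> i. x $ i mod b $ i))"

definition simulates :: "'p set \<Rightarrow> 'd::finite cell set \<Rightarrow> (('d cell \<Rightarrow> 'p) \<Rightarrow> 'p)
     \<Rightarrow> 'q set \<Rightarrow> 'd cell set \<Rightarrow> (('d cell \<Rightarrow> 'q) \<Rightarrow> 'q) \<Rightarrow> bool" where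
  "simulates QF NF fF QG NG fG \<longleftrightarrow>
     (\<exists>T::nat. T > 0 \<and> (\<exists>b. (\<forall>i. b $ i > 0) \<and> (\<exists>C. finite C \<and> 0 \<in> C \<and>
       (\<exists>phi. (\<forall>c\<in>configs QG. blockmap b C phi c \<in> configs QF) \<and>
              inj_on (blockmap b C phi) (configs QG) \<and>
              (\<forall>c\<in>configs QG. blockmap b C phi (global NG fG c)
                                 = (global NF fF ^^ T) (blockmap b C phi c))))))"

end

theory Submission
  imports Defs
begin

(* Each cell of the simulating automaton G stores the window of the simulated configuration c
   on a cube around it that contains the neighbourhood N, so it can compute its own next value
   F(c)_x. The cells whose value changes pass the new value on through von Neumann neighbours,
   one l1 step per time step; after period = d * radius + 1 steps every cell knows all changes
   in its cube and replaces its window by that of F(c). A cell that hears of no change keeps its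
   state. G is freezing because a cell only ever moves to a state of strictly smaller rank: the
   rank drops while a clock advances and, at the final update, because the window descends in
   the freezing order of F, weighted by period + 1 so that this outweighs the reset of the
   clock. *)

lemma finite_bounded_cells: "finite {n :: 'd::finite cell. \<forall>i. \<bar>n $ i\<bar> \<le> R}"
proof -
  have "{n :: 'd cell. \<forall>i. \<bar>n $ i\<bar> \<le> R} \<subseteq> vec_lambda ` (UNIV \<rightarrow>\<^sub>E {-R..R})"
  proof
    fix n :: "'d cell"
    assume n: "n \<in> {n. \<forall>i. \<bar>n $ i\<bar> \<le> R}"
    have "n $ i \<in> {-R..R}" for i
      using n abs_le_iff[of "n $ i" R] by auto
    then have "vec_nth n \<in> UNIV \<rightarrow>\<^sub>E {-R..R}"
      by (auto simp: PiE_iff)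
    then show "n \<in> vec_lambda ` (UNIV \<rightarrow>\<^sub>E {-R..R})"
      by (auto intro!: image_eqI[of _ _ "vec_nth n"])
  qed
  then show ?thesis
    by (rule finite_subset) (simp add: finite_PiE)
qed

definition l1_norm :: "'d::finite cell \<Rightarrow> int" where
  "l1_norm n = (\<Sum>i\<in>UNIV. \<bar>n $ i\<bar>)"

lemma l1_norm_nonneg: "0 \<le> l1_norm n"
  unfolding l1_norm_def by (simp add: sum_nonneg)

lemma l1_norm_zero [simp]: "l1_norm 0 = 0"
  unfolding l1_norm_def by simp

lemma l1_norm_triangle: "l1_norm (a + b) \<le> l1_norm a + l1_norm b"
  unfolding l1_norm_def by (simp add: sum.distrib[symmetric] sum_mono abs_triangle_ineq)

lemma abs_component_le_l1_norm: "\<bar>n $ i\<bar> \<le> l1_norm n"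
  unfolding l1_norm_def by (rule member_le_sum) auto

lemma l1_norm_le_card_mult:
  "(\<And>i. \<bar>n $ i\<bar> \<le> R) \<Longrightarrow> l1_norm (n :: 'd::finite cell) \<le> int CARD('d) * R"
  unfolding l1_norm_def using sum_mono[of UNIV "\<lambda>i. \<bar>n $ i\<bar>" "\<lambda>_. R"] by simp

lemma zero_in_VN: "0 \<in> VN"
  unfolding VN_def by simp

lemma finite_VN: "finite (VN :: 'd::finite cell set)"
proof -
  have "VN = insert 0 ((\<lambda>(i, s). axis i s) ` (UNIV \<times> {1, -1 :: int}) :: 'd cell set)"
    unfolding VN_def by auto
  moreover have "finite ((\<lambda>(i, s). axis i s) ` (UNIV \<times> {1, -1 :: int}) :: 'd cell set)"
    by (intro finite_imageI finite_cartesian_product) auto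
  ultimately show ?thesis
    by (metis finite_insert)
qed

lemma l1_norm_VN: "e \<in> VN \<Longrightarrow> l1_norm e \<le> 1"
proof -
  assume "e \<in> VN"
  then consider "e = 0" | i s where "e = axis i s" "s = 1 \<or> s = -1"
    unfolding VN_def by blast
  then show ?thesis
  proof cases
    case 2
    then have "l1_norm e = (\<Sum>j\<in>UNIV. if j = i then 1 else 0)"
      unfolding l1_norm_def by (intro sum.cong) (auto simp: axis_def)
    then show ?thesis
      by simp
  qed simp
qed

lemma l1_norm_le_VN_diff: "e \<in> VN \<Longrightarrow> l1_norm n \<le> l1_norm (n - e) + 1"
  using l1_norm_triangle[of "n - e" e] l1_norm_VN[of e] by simp

lemma VN_step_to_origin:
  fixes n :: "'d::finite cell"
  assumes "n \<noteq> 0"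
  obtains e where "e \<in> VN" "\<And>i. \<bar>(n - e) $ i\<bar> \<le> \<bar>n $ i\<bar>" "l1_norm (n - e) = l1_norm n - 1"
proof -
  obtain i where i: "n $ i \<noteq> 0"
    using assms by (metis vec_eq_iff zero_index)
  define e where "e = axis i (sgn (n $ i))"
  have "e \<in> VN"
    unfolding VN_def e_def using i by (cases "n $ i > 0") auto
  have component: "\<bar>(n - e) $ j\<bar> = \<bar>n $ j\<bar> - (if j = i then 1 else 0)" for j
    using i by (cases "n $ i > 0") (auto simp: e_def axis_def)
  have "l1_norm (n - e) = (\<Sum>j\<in>UNIV. \<bar>n $ j\<bar> - (if j = i then 1 else 0))"
    unfolding l1_norm_def component ..
  also have "\<dots> = l1_norm n - 1"
    unfolding l1_norm_def by (simp add: sum_subtractf)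
  finally show ?thesis
    using that[OF \<open>e \<in> VN\<close>] component by simp
qed

definition height :: "'q set \<Rightarrow> ('q \<Rightarrow> 'q \<Rightarrow> bool) \<Rightarrow> 'q \<Rightarrow> nat" where
  "height Q le q = card {q' \<in> Q. le q' q}"

lemma height_mono:
  assumes "partial_order_on_set Q le" "finite Q" "a \<in> Q" "b \<in> Q" "le a b"
  shows "height Q le a \<le> height Q le b"
proof -
  have "{q' \<in> Q. le q' a} \<subseteq> {q' \<in> Q. le q' b}"
    using assms(1,3,4,5) unfolding partial_order_on_set_def by blast
  then show ?thesis
    unfolding height_def using assms(2) by (intro card_mono) auto
qed

lemma height_strict_mono:
  assumes "partial_order_on_set Q le" "finite Q" "a \<in> Q" "b \<in> Q" "le a b" "a \<noteq> b"
  shows "height Q le a < height Q le b"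
proof -
  have "{q' \<in> Q. le q' a} \<subseteq> {q' \<in> Q. le q' b}"
    using assms(1,3,4,5) unfolding partial_order_on_set_def by blast
  moreover have "b \<in> {q' \<in> Q. le q' b} - {q' \<in> Q. le q' a}"
    using assms unfolding partial_order_on_set_def by blast
  ultimately have "{q' \<in> Q. le q' a} \<subset> {q' \<in> Q. le q' b}"
    by blast
  then show ?thesis
    unfolding height_def using assms(2) by (intro psubset_card_mono) auto
qed

definition guarded_rule ::
  "'s set \<Rightarrow> ('s \<Rightarrow> nat) \<Rightarrow> (('d::finite cell \<Rightarrow> nat) \<Rightarrow> 's) \<Rightarrow> ('d cell \<Rightarrow> nat) \<Rightarrow> nat" where
  "guarded_rule S \<mu> cand P =
     (if cand P \<in> S \<and> \<mu> (cand P) < \<mu> (from_nat_into S (P 0)) then to_nat_on S (cand P) else P 0)"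

lemma is_CA_guarded_rule:
  assumes "finite S" "finite N" "0 \<in> N"
  shows "is_CA (to_nat_on S ` S) N (guarded_rule S \<mu> cand)"
  unfolding is_CA_def guarded_rule_def using assms by auto

lemma freezing_guarded_rule:
  assumes "countable S" "0 \<in> N"
  shows "freezing (to_nat_on S ` S) N (guarded_rule S \<mu> cand)"
  unfolding freezing_def
proof (intro exI conjI)
  let ?le = "\<lambda>a b. a = b \<or> \<mu> (from_nat_into S a) < \<mu> (from_nat_into S b)"
  show "partial_order_on_set (to_nat_on S ` S) ?le"
    unfolding partial_order_on_set_def by auto
  show "\<forall>c\<in>configs (to_nat_on S ` S). \<forall>z. ?le (global N (guarded_rule S \<mu> cand) c z) (c z)"
    using assms by (auto simp: global_def guarded_rule_def pat_def)
qed

lemma simulates_by_window_code: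
  fixes w :: "('d::finite cell \<Rightarrow> 'q) \<Rightarrow> 'p"
  assumes "finite C" "0 \<in> C" "0 < T"
    and code_in: "\<And>c x. c \<in> configs Q \<Longrightarrow> w (pat C c x) \<in> QG"
    and code_inj: "\<And>c c' x. c \<in> configs Q \<Longrightarrow> c' \<in> configs Q \<Longrightarrow>
                     w (pat C c x) = w (pat C c' x) \<Longrightarrow> c x = c' x"
    and commutes: "\<And>c. c \<in> configs Q \<Longrightarrow>
                     (global NG g ^^ T) (\<lambda>x. w (pat C c x)) = (\<lambda>x. w (pat C (global N f c) x))"
  shows "simulates QG NG g Q N f"
proof -
  have blockmap: "blockmap 1 C (\<lambda>p r. w p) c = (\<lambda>x. w (pat C c x))" for c
    unfolding blockmap_def by simp
  have "inj_on (blockmap 1 C (\<lambda>p r. w p)) (configs Q)"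
    unfolding blockmap by (intro inj_onI ext) (metis code_inj)
  moreover have "blockmap 1 C (\<lambda>p r. w p) c \<in> configs QG" if "c \<in> configs Q" for c
    unfolding blockmap configs_def using code_in[OF that] by simp
  ultimately show ?thesis
    unfolding simulates_def using assms
    by (intro exI[of _ T] exI[of _ 1] exI[of _ C] exI[of _ "\<lambda>p r. w p"] conjI ballI)
       (simp_all add: blockmap)
qed

locale freezing_automaton =
  fixes Q :: "'q set" and N :: "'d::finite cell set" and f :: "('d cell \<Rightarrow> 'q) \<Rightarrow> 'q"
    and le :: "'q \<Rightarrow> 'q \<Rightarrow> bool"
  assumes CA: "is_CA Q N f"
    and order: "partial_order_on_set Q le"
    and decreasing: "\<And>c z. c \<in> configs Q \<Longrightarrow> le (global N f c z) (c z)"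
begin

lemma finite_Q: "finite Q" and finite_N: "finite N"
  using CA unfolding is_CA_def by auto

lemma global_in_configs: "c \<in> configs Q \<Longrightarrow> global N f c \<in> configs Q"
  using CA unfolding is_CA_def configs_def global_def pat_def by auto

definition radius :: int where
  "radius = (\<Sum>n\<in>N. l1_norm n)"

definition cube :: "'d cell set" where
  "cube = {n. \<forall>i. \<bar>n $ i\<bar> \<le> radius}"

definition period :: nat where
  "period = Suc (nat (int CARD('d) * radius))"

lemma finite_cube: "finite cube"
  unfolding cube_def by (rule finite_bounded_cells)

lemma zero_in_cube: "0 \<in> cube"
  unfolding cube_def radius_def by (simp add: sum_nonneg l1_norm_nonneg)

lemma N_subset_cube: "N \<subseteq> cube"
proof
  fix n
  assume "n \<in> N"
  then have "l1_norm n \<le> radius"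
    unfolding radius_def using finite_N l1_norm_nonneg by (intro member_le_sum) auto
  then show "n \<in> cube"
    unfolding cube_def using abs_component_le_l1_norm order_trans by blast
qed

lemma l1_norm_less_period: "n \<in> cube \<Longrightarrow> l1_norm n < int period"
  unfolding cube_def period_def using l1_norm_le_card_mult[of n radius] by simp

definition windows :: "('d cell \<Rightarrow> 'q) set" where
  "windows = {p. \<forall>n. (n \<in> cube \<longrightarrow> p n \<in> Q) \<and> (n \<notin> cube \<longrightarrow> p n = undefined)}"

definition change_maps :: "('d cell \<Rightarrow> 'q option) set" where
  "change_maps = {K. \<forall>n. (n \<in> cube \<longrightarrow> K n \<in> insert None (Some ` Q)) \<and> (n \<notin> cube \<longrightarrow> K n = None)}"

(* A state (p, t, K): the window p of the simulated configuration around the cell, a clock t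
   that runs once some change of the window is known, and the changes K known so far. *)
definition states :: "(('d cell \<Rightarrow> 'q) \<times> nat \<times> ('d cell \<Rightarrow> 'q option)) set" where
  "states = windows \<times> {..period} \<times> change_maps"

lemma finite_states: "finite states"
  unfolding states_def windows_def change_maps_def
  using finite_set_of_finite_funs[OF finite_cube finite_Q]
    finite_set_of_finite_funs[OF finite_cube, of "insert None (Some ` Q)"] finite_Q
  by simp

abbreviation enc where "enc \<equiv> to_nat_on states"
abbreviation dec where "dec \<equiv> from_nat_into states"

lemma dec_enc [simp]: "s \<in> states \<Longrightarrow> dec (enc s) = s"
  using countable_finite[OF finite_states] by simp

abbreviation window_of where "window_of s \<equiv> fst (dec s)"
abbreviation clock_of where "clock_of s \<equiv> fst (snd (dec s))"
abbreviation changes_of where "changes_of s \<equiv> snd (snd (dec s))"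

definition window_height :: "('d cell \<Rightarrow> 'q) \<Rightarrow> nat" where
  "window_height p = (\<Sum>n\<in>cube. height Q le (p n))"

definition state_rank :: "('d cell \<Rightarrow> 'q) \<times> nat \<times> ('d cell \<Rightarrow> 'q option) \<Rightarrow> nat" where
  "state_rank s = (case s of (p, t, K) \<Rightarrow> (period + 1) * window_height p + (period - t))"

definition reports :: "('d cell \<Rightarrow> nat) \<Rightarrow> 'd cell \<Rightarrow> 'q set" where
  "reports P n =
     {v. (n = 0 \<and> v = f (pat N (window_of (P 0)) 0) \<and> v \<noteq> window_of (P 0) 0) \<or>
         (\<exists>e\<in>VN. changes_of (P e) (n - e) = Some v)}"

(* All reports for one offset agree (reports_state_at), so the choice below is immaterial. *)
definition propagate :: "('d cell \<Rightarrow> nat) \<Rightarrow> 'd cell \<Rightarrow> 'q option" where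
  "propagate P n = (if n \<in> cube \<and> reports P n \<noteq> {} then Some (SOME v. v \<in> reports P n) else None)"

(* Taking the maximum of the neighbours' clocks lets a cell that learns its first change join
   the clock already running around it. *)
definition candidate :: "('d cell \<Rightarrow> nat) \<Rightarrow> ('d cell \<Rightarrow> 'q) \<times> nat \<times> ('d cell \<Rightarrow> 'q option)" where
  "candidate P =
     (let p = window_of (P 0); K = propagate P; t = Suc (Max ((\<lambda>e. clock_of (P e)) ` VN)) in
      if K = (\<lambda>_. None) then dec (P 0)
      else if t = period
        then (\<lambda>n. if n \<in> cube then (case K n of Some v \<Rightarrow> v | None \<Rightarrow> p n) else undefined, 0, \<lambda>_. None)
      else (p, t, K))"

definition rule :: "('d cell \<Rightarrow> nat) \<Rightarrow> nat" where
  "rule = guarded_rule states state_rank candidate"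

lemma is_CA_rule: "is_CA (enc ` states) VN rule"
  unfolding rule_def by (rule is_CA_guarded_rule[OF finite_states finite_VN zero_in_VN])

lemma freezing_rule: "freezing (enc ` states) VN rule"
  unfolding rule_def using countable_finite[OF finite_states] zero_in_VN by (rule freezing_guarded_rule)

definition known_changes :: "('d cell \<Rightarrow> 'q) \<Rightarrow> nat \<Rightarrow> 'd cell \<Rightarrow> 'd cell \<Rightarrow> 'q option" where
  "known_changes c t x n =
     (if n \<in> cube \<and> l1_norm n < int t \<and> global N f c (x + n) \<noteq> c (x + n)
      then Some (global N f c (x + n)) else None)"

(* The state of cell x after t < period steps on the coding of c, see iterate_rule. *)
definition state_at ::
  "('d cell \<Rightarrow> 'q) \<Rightarrow> nat \<Rightarrow> 'd cell \<Rightarrow> ('d cell \<Rightarrow> 'q) \<times> nat \<times> ('d cell \<Rightarrow> 'q option)" where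
  "state_at c t x =
     (pat cube c x, if known_changes c t x = (\<lambda>_. None) then 0 else t, known_changes c t x)"

lemma state_at_0: "state_at c 0 x = (pat cube c x, 0, \<lambda>_. None)"
  by (simp add: state_at_def known_changes_def fun_eq_iff l1_norm_nonneg not_less)

lemma pat_cube_in_windows: "c \<in> configs Q \<Longrightarrow> pat cube c x \<in> windows"
  unfolding windows_def pat_def configs_def by auto

lemma state_at_in_states: "c \<in> configs Q \<Longrightarrow> t \<le> period \<Longrightarrow> state_at c t x \<in> states"
  unfolding state_at_def states_def change_maps_def known_changes_def
  using pat_cube_in_windows global_in_configs by (auto simp: configs_def)

lemma dec_neighbourhood:
  assumes "c \<in> configs Q" "t \<le> period" "e \<in> VN"
  shows "dec (pat VN (\<lambda>y. enc (state_at c t y)) x e) = state_at c t (x + e)"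
  using assms state_at_in_states unfolding pat_def by simp

lemma known_changes_eq_Some_iff:
  "known_changes c t x n = Some v \<longleftrightarrow> known_changes c t x n \<noteq> None \<and> v = global N f c (x + n)"
  unfolding known_changes_def by auto

lemma known_changes_shift:
  "known_changes c t (x + e) (n - e) \<noteq> None \<longleftrightarrow>
     n - e \<in> cube \<and> l1_norm (n - e) < int t \<and> global N f c (x + n) \<noteq> c (x + n)"
  unfolding known_changes_def by (simp add: algebra_simps)

lemma known_changes_shift_eq_Some:
  "known_changes c t (x + e) (n - e) = Some v \<longleftrightarrow>
     known_changes c t (x + e) (n - e) \<noteq> None \<and> v = global N f c (x + n)"
  unfolding known_changes_eq_Some_iff by (simp add: algebra_simps)

lemma known_changes_mono: "known_changes c t x n \<noteq> None \<Longrightarrow> t \<le> t' \<Longrightarrow> known_changes c t' x n \<noteq> None"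
  unfolding known_changes_def by (auto split: if_splits)

lemma known_changes_Suc:
  "known_changes c (Suc t) x n \<noteq> None \<longleftrightarrow>
     n \<in> cube \<and> global N f c (x + n) \<noteq> c (x + n) \<and>
     (n = 0 \<or> (\<exists>e\<in>VN. known_changes c t (x + e) (n - e) \<noteq> None))"
proof
  assume "known_changes c (Suc t) x n \<noteq> None"
  then have n: "n \<in> cube" "l1_norm n \<le> int t" "global N f c (x + n) \<noteq> c (x + n)"
    unfolding known_changes_def by (auto split: if_splits)
  have "\<exists>e\<in>VN. known_changes c t (x + e) (n - e) \<noteq> None" if nonzero: "n \<noteq> 0"
  proof -
    obtain e where e: "e \<in> VN" "\<And>i. \<bar>(n - e) $ i\<bar> \<le> \<bar>n $ i\<bar>" "l1_norm (n - e) = l1_norm n - 1"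
      using VN_step_to_origin[OF nonzero] by blast
    have "\<bar>(n - e) $ i\<bar> \<le> radius" for i
      using order_trans[OF e(2)[of i]] n(1) unfolding cube_def by blast
    then have "n - e \<in> cube"
      unfolding cube_def by blast
    then have "known_changes c t (x + e) (n - e) \<noteq> None"
      unfolding known_changes_shift using e(3) n by simp
    with e(1) show ?thesis
      by blast
  qed
  with n show "n \<in> cube \<and> global N f c (x + n) \<noteq> c (x + n) \<and>
      (n = 0 \<or> (\<exists>e\<in>VN. known_changes c t (x + e) (n - e) \<noteq> None))"
    by blast
next
  assume n: "n \<in> cube \<and> global N f c (x + n) \<noteq> c (x + n) \<and>
      (n = 0 \<or> (\<exists>e\<in>VN. known_changes c t (x + e) (n - e) \<noteq> None))"
  have "l1_norm n < int (Suc t)" if "e \<in> VN" "known_changes c t (x + e) (n - e) \<noteq> None" for e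
    using that l1_norm_le_VN_diff[of e n] unfolding known_changes_shift by simp
  with n show "known_changes c (Suc t) x n \<noteq> None"
    unfolding known_changes_def by auto
qed

lemma reports_state_at:
  assumes c: "c \<in> configs Q" and t: "t < period" and n: "n \<in> cube"
  shows "reports (pat VN (\<lambda>y. enc (state_at c t y)) x) n = {v. known_changes c (Suc t) x n = Some v}"
proof -
  let ?P = "pat VN (\<lambda>y. enc (state_at c t y)) x"
  have neighbour: "dec (?P e) = state_at c t (x + e)" if "e \<in> VN" for e
    using dec_neighbourhood[OF c _ that] t by simp
  have changes: "changes_of (?P e) (n - e) = known_changes c t (x + e) (n - e)" if "e \<in> VN" for e
    using neighbour[OF that] by (simp add: state_at_def)
  have window: "window_of (?P 0) = pat cube c x"
    using neighbour[OF zero_in_VN] by (simp add: state_at_def)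
  have own_old: "pat cube c x 0 = c x"
    using zero_in_cube by (simp add: pat_def)
  have own_new: "f (pat N (pat cube c x) 0) = global N f c x"
    using N_subset_cube unfolding global_def pat_def by (intro arg_cong[where f = f] ext) auto
  have "v \<in> reports ?P n \<longleftrightarrow>
      (n = 0 \<and> v = global N f c x \<and> v \<noteq> c x) \<or>
      (\<exists>e\<in>VN. known_changes c t (x + e) (n - e) = Some v)" for v
    unfolding reports_def window own_old own_new using changes by auto
  also have "\<dots> v \<longleftrightarrow> known_changes c (Suc t) x n = Some v" for v
    unfolding known_changes_eq_Some_iff[of c "Suc t"] known_changes_Suc known_changes_shift_eq_Some
      known_changes_shift
    using n by auto
  finally show ?thesis
    by blast
qed

lemma propagate_state_at:
  assumes "c \<in> configs Q" "t < period"
  shows "propagate (pat VN (\<lambda>y. enc (state_at c t y)) x) = known_changes c (Suc t) x"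
proof
  fix n
  show "propagate (pat VN (\<lambda>y. enc (state_at c t y)) x) n = known_changes c (Suc t) x n"
  proof (cases "n \<in> cube")
    case True
    then show ?thesis
      unfolding propagate_def reports_state_at[OF assms True] by (cases "known_changes c (Suc t) x n") auto
  qed (simp add: propagate_def known_changes_def)
qed

lemma clock_max_state_at:
  assumes c: "c \<in> configs Q" and t: "t < period" and changes: "known_changes c (Suc t) x \<noteq> (\<lambda>_. None)"
  shows "Max ((\<lambda>e. clock_of (pat VN (\<lambda>y. enc (state_at c t y)) x e)) ` VN) = t"
proof -
  have clocks: "(\<lambda>e. clock_of (pat VN (\<lambda>y. enc (state_at c t y)) x e)) ` VN =
      (\<lambda>e. fst (snd (state_at c t (x + e)))) ` VN"
    using dec_neighbourhood[OF c] t by (intro image_cong) auto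
  have "\<exists>e\<in>VN. known_changes c t (x + e) \<noteq> (\<lambda>_. None)" if "t \<noteq> 0"
  proof -
    obtain n where "known_changes c (Suc t) x n \<noteq> None"
      using changes by fastforce
    then consider "n = 0" "global N f c x \<noteq> c x"
      | e where "e \<in> VN" "known_changes c t (x + e) (n - e) \<noteq> None"
      unfolding known_changes_Suc by auto
    then show ?thesis
    proof cases
      case 1
      then have "known_changes c t x 0 \<noteq> None"
        using that zero_in_cube by (simp add: known_changes_def)
      then show ?thesis
        using zero_in_VN by (intro bexI[of _ 0]) auto
    next
      case 2
      then show ?thesis
        by (intro bexI[of _ e]) (auto simp: fun_eq_iff)
    qed
  qed
  then have "t \<in> (\<lambda>e. fst (snd (state_at c t (x + e)))) ` VN"
    using zero_in_VN by (cases "t = 0") (force simp: state_at_def)+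
  moreover have "fst (snd (state_at c t y)) \<le> t" for y
    by (simp add: state_at_def)
  ultimately show ?thesis
    unfolding clocks using finite_VN by (intro Max_eqI) auto
qed

lemma window_update_at_period:
  "(\<lambda>n. if n \<in> cube then (case known_changes c period x n of Some v \<Rightarrow> v | None \<Rightarrow> pat cube c x n)
        else undefined) = pat cube (global N f c) x"
  using l1_norm_less_period by (auto simp: known_changes_def pat_def fun_eq_iff)

lemma window_height_global_less:
  assumes c: "c \<in> configs Q" and n: "n \<in> cube" "global N f c (x + n) \<noteq> c (x + n)"
  shows "window_height (pat cube (global N f c) x) < window_height (pat cube c x)"
  unfolding window_height_def
proof (rule sum_strict_mono_ex1[OF finite_cube])
  have "global N f c z \<in> Q" "c z \<in> Q" "le (global N f c z) (c z)" for z
    using c global_in_configs[OF c] decreasing[OF c] by (auto simp: configs_def)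
  note height = height_mono[OF order finite_Q this] height_strict_mono[OF order finite_Q this]
  show "\<forall>m\<in>cube. height Q le (pat cube (global N f c) x m) \<le> height Q le (pat cube c x m)"
    using height(1) by (simp add: pat_def)
  show "\<exists>m\<in>cube. height Q le (pat cube (global N f c) x m) < height Q le (pat cube c x m)"
    using height(2) n by (auto simp: pat_def)
qed

lemma state_rank_state_at:
  "(period + 1) * window_height (pat cube c x) + (period - t) \<le> state_rank (state_at c t x)"
  by (simp add: state_rank_def state_at_def)

lemma candidate_state_at:
  assumes c: "c \<in> configs Q" and t: "t < period"
  shows "candidate (pat VN (\<lambda>y. enc (state_at c t y)) x) =
    (if known_changes c (Suc t) x = (\<lambda>_. None) then state_at c t x
     else if Suc t = period then (pat cube (global N f c) x, 0, \<lambda>_. None)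
     else state_at c (Suc t) x)"
proof -
  have dec0: "dec (pat VN (\<lambda>y. enc (state_at c t y)) x 0) = state_at c t x"
    using dec_neighbourhood[OF c _ zero_in_VN] t by simp
  show ?thesis
  proof (cases "known_changes c (Suc t) x = (\<lambda>_. None)")
    case True
    then show ?thesis
      unfolding candidate_def Let_def propagate_state_at[OF c t] dec0 by simp
  next
    case False
    have window: "fst (state_at c t x) = pat cube c x"
      by (simp add: state_at_def)
    note candidate = candidate_def Let_def propagate_state_at[OF c t] dec0 clock_max_state_at[OF c t False]
    show ?thesis
    proof (cases "Suc t = period")
      case True
      show ?thesis
        using False window_update_at_period[of c x] unfolding candidate True window by simp
    qed (use False in \<open>simp add: candidate window state_at_def[of c "Suc t"]\<close>)
  qed
qed

lemma state_at_quiet: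
  assumes "known_changes c (Suc t) x = (\<lambda>_. None)"
  shows "state_at c t x = (pat cube c x, 0, \<lambda>_. None)" "state_at c (Suc t) x = state_at c t x"
proof -
  have "known_changes c t x = (\<lambda>_. None)"
    using assms known_changes_mono[of c t x _ "Suc t"] by fastforce
  then show "state_at c t x = (pat cube c x, 0, \<lambda>_. None)" "state_at c (Suc t) x = state_at c t x"
    using assms by (simp_all add: state_at_def)
qed

lemma window_quiet_at_period:
  assumes "known_changes c period x = (\<lambda>_. None)"
  shows "pat cube (global N f c) x = pat cube c x"
proof -
  have "(\<lambda>n. if n \<in> cube then pat cube c x n else undefined) = pat cube c x"
    by (auto simp: pat_def)
  then show ?thesis
    using window_update_at_period[of c x] unfolding assms option.case by metis
qed

lemma state_rank_next_less:
  assumes c: "c \<in> configs Q" and t: "t < period" and changes: "known_changes c (Suc t) x \<noteq> (\<lambda>_. None)"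
  shows "state_rank (if Suc t < period then state_at c (Suc t) x else (pat cube (global N f c) x, 0, \<lambda>_. None))
    < state_rank (state_at c t x)"
proof (cases "Suc t < period")
  case True
  have "state_at c (Suc t) x = (pat cube c x, Suc t, known_changes c (Suc t) x)"
    using changes by (simp add: state_at_def)
  then show ?thesis
    using state_rank_state_at[of c x t] True by (simp add: state_rank_def)
next
  case False
  let ?new = "pat cube (global N f c) x"
  obtain n where "known_changes c (Suc t) x n \<noteq> None"
    using changes by fastforce
  then have "window_height ?new < window_height (pat cube c x)"
    using window_height_global_less[OF c] by (auto simp: known_changes_def split: if_splits)
  then have "(period + 1) * (window_height ?new + 1) \<le> (period + 1) * window_height (pat cube c x)"
    by (intro mult_le_mono2) simp
  then show ?thesis
    using state_rank_state_at[of c x t] False by (simp add: state_rank_def)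
qed

lemma rule_state_at:
  assumes c: "c \<in> configs Q" and t: "t < period"
  shows "rule (pat VN (\<lambda>y. enc (state_at c t y)) x) =
    enc (if Suc t < period then state_at c (Suc t) x else (pat cube (global N f c) x, 0, \<lambda>_. None))"
    (is "rule ?P = enc ?next")
proof -
  have dec0: "dec (?P 0) = state_at c t x"
    using dec_neighbourhood[OF c _ zero_in_VN] t by simp
  have candidate: "candidate ?P = (if known_changes c (Suc t) x = (\<lambda>_. None) then state_at c t x else ?next)"
    using candidate_state_at[OF c t] t by auto
  show ?thesis
  proof (cases "known_changes c (Suc t) x = (\<lambda>_. None)")
    case True
    have "rule ?P = ?P 0"
      unfolding rule_def guarded_rule_def candidate dec0 using True by simp
    also have "\<dots> = enc (state_at c t x)"
      by (simp add: pat_def zero_in_VN)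
    also have "state_at c t x = ?next"
      using state_at_quiet[OF True] window_quiet_at_period[of c x] True t
      by (cases "Suc t = period") auto
    finally show ?thesis .
  next
    case False
    have "?next \<in> states"
      using state_at_in_states[OF c] pat_cube_in_windows[OF global_in_configs[OF c]]
      by (simp add: states_def change_maps_def)
    then show ?thesis
      using state_rank_next_less[OF c t False] False
      unfolding rule_def guarded_rule_def candidate dec0 by simp
  qed
qed

lemma iterate_rule:
  assumes c: "c \<in> configs Q"
  shows "t < period \<Longrightarrow> (global VN rule ^^ t) (\<lambda>y. enc (state_at c 0 y)) = (\<lambda>y. enc (state_at c t y))"
proof (induction t)
  case (Suc t)
  then show ?case
    using rule_state_at[OF c, of t] by (simp add: global_def)
qed simp

lemma iterate_rule_period:
  assumes c: "c \<in> configs Q"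
  shows "(global VN rule ^^ period) (\<lambda>y. enc (pat cube c y, 0, \<lambda>_. None)) =
    (\<lambda>y. enc (pat cube (global N f c) y, 0, \<lambda>_. None))"
proof -
  obtain t where t: "period = Suc t"
    unfolding period_def by blast
  have "(global VN rule ^^ t) (\<lambda>y. enc (pat cube c y, 0, \<lambda>_. None)) = (\<lambda>y. enc (state_at c t y))"
    using iterate_rule[OF c, of t] t by (simp add: state_at_0)
  then show ?thesis
    using rule_state_at[OF c, of t] t by (simp add: global_def)
qed

lemma simulates_rule: "simulates (enc ` states) VN rule Q N f"
proof (rule simulates_by_window_code[where w = "\<lambda>p. enc (p, 0, \<lambda>_. None)" and C = cube and T = period])
  have initial: "(pat cube c x, 0, \<lambda>_. None) \<in> states" if "c \<in> configs Q" for c x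
    using state_at_in_states[OF that, of 0] by (simp add: state_at_0)
  show "finite cube" "0 \<in> cube" "0 < period"
    by (simp_all add: finite_cube zero_in_cube period_def)
  show "enc (pat cube c x, 0, \<lambda>_. None) \<in> enc ` states" if "c \<in> configs Q" for c x
    using initial[OF that] by simp
  show "c x = c' x"
    if "c \<in> configs Q" "c' \<in> configs Q"
      "enc (pat cube c x, 0, \<lambda>_. None) = enc (pat cube c' x, 0, \<lambda>_. None)" for c c' x
  proof -
    have "(pat cube c x, 0, \<lambda>_. None) = (pat cube c' x, 0 :: nat, \<lambda>_. None)"
      using arg_cong[where f = dec, OF that(3)] initial[OF that(1)] initial[OF that(2)] by simp
    then have "pat cube c x 0 = pat cube c' x 0"
      by simp
    then show ?thesis
      using zero_in_cube by (simp add: pat_def)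
  qed
  show "(global VN rule ^^ period) (\<lambda>x. enc (pat cube c x, 0, \<lambda>_. None)) =
      (\<lambda>x. enc (pat cube (global N f c) x, 0, \<lambda>_. None))" if "c \<in> configs Q" for c
    by (rule iterate_rule_period[OF that])
qed

end

theorem lemma5:
  fixes Q :: "'q set" and N :: "('d::finite) cell set" and f :: "('d cell \<Rightarrow> 'q) \<Rightarrow> 'q"
  assumes "is_CA Q N f" and "freezing Q N f"
  shows "\<exists>(QG :: nat set) g. is_CA QG (VN :: 'd cell set) g \<and> freezing QG VN g
            \<and> simulates QG VN g Q N f"
proof -
  from assms(2) obtain le where "partial_order_on_set Q le"
    and "\<forall>c\<in>configs Q. \<forall>z. le (global N f c z) (c z)"
    unfolding freezing_def by blast
  then interpret freezing_automaton Q N f le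
    using assms(1) by unfold_locales auto
  show ?thesis
    using is_CA_rule freezing_rule simulates_rule by blast
qed

end
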